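(* In the public goods model with $k\ge n$, for any $\alpha\in(0,1]$, any allocation that is $\alpha$-RRS is also $\alpha\cdot\frac{n}{2n-1}$-Prop. Further, when $n$ divides $k$, any $\alpha$-RRS allocation is $\alpha$-Prop.
   Context: Public goods model: agents $[n]$, goods $G=[m]$, integer $0\le k\le m$, nonnegative integer additive values $v_{ij}$, $v_i(S)=\sum_{j\in S}v_{ij}$; an allocation is $x\subseteq G$ with $|x|\le k$. $\mathrm{Prop}_i=\frac1n\max_{|y|\le k}v_i(y)$, $\mathrm{RRS}_i=\max_{|y|\le\lfloor k/n\rfloor}v_i(y)$. $x$ is $\beta$-RRS if $v_i(x)\ge\beta\,\mathrm{RRS}_i$ for all $i$, and $\beta$-Prop if $v_i(x)\ge\beta\,\mathrm{Prop}_i$ for all $i$. *)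

theory Defs
  imports "HOL-Analysis.Analysis"
begin

definition val :: "(nat \<Rightarrow> nat \<Rightarrow> nat) \<Rightarrow> nat \<Rightarrow> nat set \<Rightarrow> real" where
  "val v i S = real (\<Sum>j\<in>S. v i j)"

definition maxval :: "(nat \<Rightarrow> nat \<Rightarrow> nat) \<Rightarrow> nat \<Rightarrow> nat \<Rightarrow> nat \<Rightarrow> real" where
  "maxval v m i t = Max {val v i y | y. y \<subseteq> {..<m} \<and> card y \<le> t}"

definition Prop_share :: "(nat \<Rightarrow> nat \<Rightarrow> nat) \<Rightarrow> nat \<Rightarrow> nat \<Rightarrow> nat \<Rightarrow> nat \<Rightarrow> real" where
  "Prop_share v n m k i = maxval v m i k / real n"

definition RRS :: "(nat \<Rightarrow> nat \<Rightarrow> nat) \<Rightarrow> nat \<Rightarrow> nat \<Rightarrow> nat \<Rightarrow> nat \<Rightarrow> real" where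
  "RRS v n m k i = maxval v m i (k div n)"

definition is_allocation :: "nat \<Rightarrow> nat \<Rightarrow> nat set \<Rightarrow> bool" where
  "is_allocation m k x \<longleftrightarrow> x \<subseteq> {..<m} \<and> card x \<le> k"

definition beta_RRS :: "(nat \<Rightarrow> nat \<Rightarrow> nat) \<Rightarrow> nat \<Rightarrow> nat \<Rightarrow> nat \<Rightarrow> real \<Rightarrow> nat set \<Rightarrow> bool" where
  "beta_RRS v n m k \<beta> x \<longleftrightarrow> (\<forall>i<n. val v i x \<ge> \<beta> * RRS v n m k i)"

definition beta_Prop :: "(nat \<Rightarrow> nat \<Rightarrow> nat) \<Rightarrow> nat \<Rightarrow> nat \<Rightarrow> nat \<Rightarrow> real \<Rightarrow> nat set \<Rightarrow> bool" where
  "beta_Prop v n m k \<beta> x \<longleftrightarrow> (\<forall>i<n. val v i x \<ge> \<beta> * Prop_share v n m k i)"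

end

theory Submission
  imports Defs
begin

text \<open>A best bundle of \<open>k\<close> goods splits into at most \<open>p\<close> bundles of at most \<open>q = k div n\<close> goods
  whenever \<open>k \<le> p * q\<close>, and each part is worth at most \<open>RRS\<^sub>i\<close>; hence \<open>n \<cdot> Prop\<^sub>i \<le> p \<cdot> RRS\<^sub>i\<close>.
  Since \<open>k mod n \<le> n - 1 \<le> (n - 1) * q\<close>, one may take \<open>p = 2n - 1\<close>, and \<open>p = n\<close> when \<open>n\<close> divides \<open>k\<close>.\<close>

lemma finite_bundle_values: "finite {val v i y | y. y \<subseteq> {..<m} \<and> card y \<le> t}"
proof -
  have "{val v i y | y. y \<subseteq> {..<m} \<and> card y \<le> t} \<subseteq> val v i ` Pow {..<m}" by auto
  then show ?thesis by (rule finite_subset) auto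
qed

lemma maxval_ge: "y \<subseteq> {..<m} \<Longrightarrow> card y \<le> t \<Longrightarrow> val v i y \<le> maxval v m i t"
  unfolding maxval_def by (rule Max_ge[OF finite_bundle_values]) auto

lemma maxval_attained:
  obtains y where "y \<subseteq> {..<m}" "card y \<le> t" "maxval v m i t = val v i y"
proof -
  have "{val v i y | y. y \<subseteq> {..<m} \<and> card y \<le> t} \<noteq> {}" by auto
  then have "maxval v m i t \<in> {val v i y | y. y \<subseteq> {..<m} \<and> card y \<le> t}"
    unfolding maxval_def by (rule Max_in[OF finite_bundle_values])
  then show ?thesis using that by auto
qed

lemma maxval_0 [simp]: "maxval v m i 0 = 0"
proof -
  obtain y where y: "y \<subseteq> {..<m}" "card y \<le> 0" "maxval v m i 0 = val v i y"
    by (rule maxval_attained)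
  have "finite y" using y(1) finite_subset by blast
  with y show ?thesis by (simp add: val_def)
qed

lemma maxval_mono: "t \<le> t' \<Longrightarrow> maxval v m i t \<le> maxval v m i t'"
  by (metis maxval_attained maxval_ge order_trans)

lemma maxval_add_le: "maxval v m i (s + t) \<le> maxval v m i s + maxval v m i t"
proof -
  obtain y where y: "y \<subseteq> {..<m}" "card y \<le> s + t" "maxval v m i (s + t) = val v i y"
    by (rule maxval_attained)
  have "finite y" using y(1) finite_subset by blast
  obtain z where z: "z \<subseteq> y" "card z = min s (card y)"
    using obtain_subset_with_card_n[of "min s (card y)" y] by auto
  have "card (y - z) \<le> t"
    using card_Diff_subset[OF finite_subset[OF z(1) \<open>finite y\<close>] z(1)] z(2) y(2) by linarith
  have "maxval v m i (s + t) = val v i z + val v i (y - z)"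
    using y(3) sum.subset_diff[OF z(1) \<open>finite y\<close>, of "v i"] by (simp add: val_def)
  also have "\<dots> \<le> maxval v m i s + maxval v m i t"
    using y(1) z \<open>card (y - z) \<le> t\<close> by (intro add_mono maxval_ge) auto
  finally show ?thesis .
qed

lemma maxval_le_mult: "t \<le> p * q \<Longrightarrow> maxval v m i t \<le> real p * maxval v m i q"
proof -
  have "maxval v m i (p * q) \<le> real p * maxval v m i q" for p
  proof (induction p)
    case (Suc p)
    have "maxval v m i (Suc p * q) \<le> maxval v m i q + maxval v m i (p * q)"
      using maxval_add_le by simp
    with Suc.IH show ?case by (simp add: algebra_simps)
  qed simp
  then show "t \<le> p * q \<Longrightarrow> ?thesis" using maxval_mono order_trans by blast
qed

lemma le_mult_div_of_le:
  fixes n k :: nat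
  assumes "0 < n" and "n \<le> k"
  shows "k \<le> (2 * n - 1) * (k div n)"
proof -
  have "1 \<le> k div n" using assms div_le_mono[of n k n] by simp
  then have "n - 1 \<le> (n - 1) * (k div n)" by simp
  moreover have "k mod n \<le> n - 1" using \<open>0 < n\<close> mod_less_divisor[of n k] by linarith
  moreover have "(2 * n - 1) * (k div n) = n * (k div n) + (n - 1) * (k div n)"
    using \<open>0 < n\<close> by (simp add: diff_mult_distrib)
  ultimately show ?thesis by (metis add_le_mono div_mult_mod_eq mult.commute order_trans le_refl)
qed

lemma beta_RRS_imp_beta_Prop:
  assumes "k \<le> p * (k div n)" and "0 < p" and "0 \<le> \<alpha>" and "beta_RRS v n m k \<alpha> x"
  shows "beta_Prop v n m k (\<alpha> * (real n / real p)) x"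
  unfolding beta_Prop_def
proof (intro allI impI)
  fix i assume "i < n"
  have "maxval v m i k \<le> real p * RRS v n m k i"
    unfolding RRS_def using assms(1) by (rule maxval_le_mult)
  then have "\<alpha> * (real n / real p) * Prop_share v n m k i \<le> \<alpha> * RRS v n m k i"
    using \<open>i < n\<close> assms(2,3) by (simp add: Prop_share_def field_simps mult_left_mono)
  also have "\<dots> \<le> val v i x" using assms(4) \<open>i < n\<close> by (simp add: beta_RRS_def)
  finally show "\<alpha> * (real n / real p) * Prop_share v n m k i \<le> val v i x" .
qed

theorem lemma2:
  fixes v :: "nat \<Rightarrow> nat \<Rightarrow> nat" and n m k :: nat and \<alpha> :: real and x :: "nat set"
  assumes "n \<ge> 1" and "k \<le> m" and "n \<le> k"
    and "0 < \<alpha>" and "\<alpha> \<le> 1"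
    and "is_allocation m k x"
    and "beta_RRS v n m k \<alpha> x"
  shows "beta_Prop v n m k (\<alpha> * (real n / (2 * real n - 1))) x
       \<and> (n dvd k \<longrightarrow> beta_Prop v n m k \<alpha> x)"
proof
  have "k \<le> (2 * n - 1) * (k div n)" using assms(1,3) by (intro le_mult_div_of_le) auto
  moreover have "real (2 * n - 1) = 2 * real n - 1" using assms(1) by (simp add: of_nat_diff)
  ultimately show "beta_Prop v n m k (\<alpha> * (real n / (2 * real n - 1))) x"
    using beta_RRS_imp_beta_Prop[of k "2 * n - 1" n \<alpha> v m x] assms(1,4,7) by simp
  show "n dvd k \<longrightarrow> beta_Prop v n m k \<alpha> x"
    using beta_RRS_imp_beta_Prop[of k n n \<alpha> v m x] assms(1,4,7) by simp
qed

end
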